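(* Let $\Gamma$ be a graph such that $\chi(\overline{\Gamma})=k$. Let $H$ be a graph and suppose $F$ is a bipartite graph on $k$ vertices which does not contain any graph in $\mathcal{F}_H$ as a subgraph. Then $\Gamma$ has a subgraph $G$ with at least $e(\Gamma)e(F)/\binom{k}{2}$ edges that does not contain $H$ as an induced subgraph.
   Context: For a graph $H$ and a vertex partition $V(H)=V_1\sqcup\dots\sqcup V_k$, the quotient graph is the graph on $\{1,\dots,k\}$ in which $i\ne j$ are adjacent if some vertex of $V_i$ is adjacent in $H$ to some vertex of $V_j$. If every $V_i$ is a clique in $H$, this is a clique quotient of $H$. $\mathcal{F}_H$ denotes the family of bipartite graphs that are clique quotients of $H$. $\overline{\Gamma}$ is the complement of $\Gamma$ and $\chi$ denotes chromatic number. *)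

theory Defs
  imports Complex_Main
begin

definition graph :: "'a set \<Rightarrow> 'a set set \<Rightarrow> bool" where
  "graph V E \<longleftrightarrow> finite V \<and> (\<forall>e\<in>E. e \<subseteq> V \<and> card e = 2)"

definition complement :: "'a set \<Rightarrow> 'a set set \<Rightarrow> 'a set set" where
  "complement V E = {{u, v} | u v. u \<in> V \<and> v \<in> V \<and> u \<noteq> v \<and> {u, v} \<notin> E}"

definition proper_colouring :: "'a set \<Rightarrow> 'a set set \<Rightarrow> nat \<Rightarrow> ('a \<Rightarrow> nat) \<Rightarrow> bool" where
  "proper_colouring V E k c \<longleftrightarrow> (\<forall>v\<in>V. c v < k) \<and> (\<forall>u v. {u, v} \<in> E \<longrightarrow> c u \<noteq> c v)"

definition chromatic_number :: "'a set \<Rightarrow> 'a set set \<Rightarrow> nat" where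
  "chromatic_number V E = (LEAST k. \<exists>c. proper_colouring V E k c)"

definition bipartite :: "'a set \<Rightarrow> 'a set set \<Rightarrow> bool" where
  "bipartite V E \<longleftrightarrow> (\<exists>c. proper_colouring V E 2 c)"

definition contains_subgraph :: "'b set \<Rightarrow> 'b set set \<Rightarrow> 'a set \<Rightarrow> 'a set set \<Rightarrow> bool" where
  "contains_subgraph V2 E2 V1 E1 \<longleftrightarrow>
     (\<exists>f. inj_on f V1 \<and> f ` V1 \<subseteq> V2 \<and>
          (\<forall>u\<in>V1. \<forall>v\<in>V1. {u, v} \<in> E1 \<longrightarrow> {f u, f v} \<in> E2))"

definition contains_induced :: "'b set \<Rightarrow> 'b set set \<Rightarrow> 'a set \<Rightarrow> 'a set set \<Rightarrow> bool" where
  "contains_induced V2 E2 V1 E1 \<longleftrightarrow>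
     (\<exists>f. inj_on f V1 \<and> f ` V1 \<subseteq> V2 \<and>
          (\<forall>u\<in>V1. \<forall>v\<in>V1. u \<noteq> v \<longrightarrow> ({u, v} \<in> E1 \<longleftrightarrow> {f u, f v} \<in> E2)))"

text \<open>A partition V = V_1 \<squnion> ... \<squnion> V_m into nonempty parts is encoded by a labelling
  p : V \<rightarrow> {1..m} that is onto {1..m}; V_i = {v \<in> V. p v = i}.\<close>
definition vertex_partition :: "'a set \<Rightarrow> nat \<Rightarrow> ('a \<Rightarrow> nat) \<Rightarrow> bool" where
  "vertex_partition V m p \<longleftrightarrow> p ` V = {1..m}"

definition quotient_edges :: "'a set \<Rightarrow> 'a set set \<Rightarrow> nat \<Rightarrow> ('a \<Rightarrow> nat) \<Rightarrow> nat set set" where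
  "quotient_edges V E m p =
     {{i, j} | i j. i \<in> {1..m} \<and> j \<in> {1..m} \<and> i \<noteq> j \<and>
        (\<exists>u\<in>V. \<exists>v\<in>V. p u = i \<and> p v = j \<and> {u, v} \<in> E)}"

definition clique_partition :: "'a set \<Rightarrow> 'a set set \<Rightarrow> nat \<Rightarrow> ('a \<Rightarrow> nat) \<Rightarrow> bool" where
  "clique_partition V E m p \<longleftrightarrow> vertex_partition V m p \<and>
     (\<forall>u\<in>V. \<forall>v\<in>V. u \<noteq> v \<and> p u = p v \<longrightarrow> {u, v} \<in> E)"

definition FH :: "'a set \<Rightarrow> 'a set set \<Rightarrow> (nat set \<times> nat set set) set" where
  "FH V E = {({1..m}, quotient_edges V E m p) | m p.
               clique_partition V E m p \<and> bipartite {1..m} (quotient_edges V E m p)}"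

end

theory Submission
  imports Defs "HOL-Combinatorics.Permutations"
begin

text \<open>
  Properly colour the complement of \<Gamma> with k colours, so that the colour classes are cliques
  of \<Gamma>, and identify the colours with the vertices of F. Keep an edge of \<Gamma> if it lies inside
  a class or joins two classes whose colours are adjacent in F. In an induced copy of H in the
  resulting graph G the classes cut H into cliques, and the quotient maps injectively into F;
  so the quotient is bipartite, a member of F_H contained in F, which is excluded.
  Composing the identification with a uniformly random permutation of the vertices of F, an
  edge of \<Gamma> between two classes survives with probability e(F) / C(k,2), while edges inside a
  class always survive; hence some permutation keeps at least e(\<Gamma>) e(F) / C(k,2) edges.
\<close>

lemma proper_colouring_complement_same_colour:
  assumes "proper_colouring V (complement V E) k c" "u \<in> V" "v \<in> V" "u \<noteq> v" "c u = c v"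
  shows "{u, v} \<in> E"
  using assms unfolding proper_colouring_def complement_def by blast

lemma ex_proper_colouring_complement:
  assumes "finite V"
  shows "\<exists>c. proper_colouring V (complement V E) (chromatic_number V (complement V E)) c"
proof -
  obtain c where c: "bij_betw c V {0..<card V}"
    using ex_bij_betw_finite_nat[OF assms] by blast
  have "proper_colouring V (complement V E) (card V) c"
    unfolding proper_colouring_def complement_def
  proof (intro conjI allI impI ballI)
    show "c v < card V" if "v \<in> V" for v
      using bij_betw_apply[OF c that] by simp
    fix x y assume "{x, y} \<in> {{u, v} |u v. u \<in> V \<and> v \<in> V \<and> u \<noteq> v \<and> {u, v} \<notin> E}"
    then show "c x \<noteq> c y"
      using c by (auto simp: doubleton_eq_iff bij_betw_def inj_on_eq_iff)
  qed
  then have "\<exists>n c. proper_colouring V (complement V E) n c"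
    by blast
  then show ?thesis
    unfolding chromatic_number_def by (rule LeastI_ex)
qed

lemma ex_clique_cover_indexed_by:
  assumes "finite V" "finite A" "chromatic_number V (complement V E) = card A"
  shows "\<exists>\<sigma>. \<sigma> ` V \<subseteq> A \<and> (\<forall>u\<in>V. \<forall>v\<in>V. u \<noteq> v \<and> \<sigma> u = \<sigma> v \<longrightarrow> {u, v} \<in> E)"
proof -
  obtain c where c: "proper_colouring V (complement V E) (card A) c"
    using ex_proper_colouring_complement[OF assms(1)] assms(3) by metis
  obtain g where g: "bij_betw g {0..<card A} A"
    using ex_bij_betw_nat_finite[OF assms(2)] by blast
  have "(g \<circ> c) ` V \<subseteq> A"
    using c bij_betw_apply[OF g] unfolding proper_colouring_def by auto
  moreover have "{u, v} \<in> E" if "u \<in> V" "v \<in> V" "u \<noteq> v" "g (c u) = g (c v)" for u v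
  proof (rule proper_colouring_complement_same_colour[OF c that(1-3)])
    show "c u = c v"
      using that c g unfolding proper_colouring_def bij_betw_def by (auto simp: inj_on_eq_iff)
  qed
  ultimately show ?thesis
    by (intro exI[of _ "g \<circ> c"]) auto
qed

lemma bipartite_if_hom_into_bipartite:
  assumes "bipartite VF EF" "\<phi> ` W \<subseteq> VF" "\<And>x y. {x, y} \<in> D \<Longrightarrow> {\<phi> x, \<phi> y} \<in> EF"
  shows "bipartite W D"
proof -
  obtain d where "proper_colouring VF EF 2 d"
    using assms(1) unfolding bipartite_def by blast
  then have "proper_colouring W D 2 (d \<circ> \<phi>)"
    using assms(2,3) unfolding proper_colouring_def by auto
  then show ?thesis
    unfolding bipartite_def by blast
qed

lemma ex_FH_subgraph_if_clique_fibred_hom: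
  assumes "finite VH" "bipartite VF EF" "q ` VH \<subseteq> VF"
    and fibres: "\<And>u v. u \<in> VH \<Longrightarrow> v \<in> VH \<Longrightarrow> u \<noteq> v \<Longrightarrow> q u = q v \<Longrightarrow> {u, v} \<in> EH"
    and edges: "\<And>u v. u \<in> VH \<Longrightarrow> v \<in> VH \<Longrightarrow> {u, v} \<in> EH \<Longrightarrow> q u \<noteq> q v \<Longrightarrow> {q u, q v} \<in> EF"
  shows "\<exists>(W, D) \<in> FH VH EH. contains_subgraph VF EF W D"
proof -
  define m where "m = card (q ` VH)"
  obtain h where h: "bij_betw h (q ` VH) {1..m}"
    using finite_same_card_bij[of "q ` VH" "{1..m}"] assms(1) unfolding m_def by auto
  define p where "p = h \<circ> q"
  define \<phi> where "\<phi> = inv_into (q ` VH) h"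
  have \<phi>: "bij_betw \<phi> {1..m} (q ` VH)"
    unfolding \<phi>_def using h by (rule bij_betw_inv_into)
  have \<phi>_p: "\<phi> (p u) = q u" if "u \<in> VH" for u
    unfolding \<phi>_def p_def using h that by (simp add: bij_betw_inv_into_left)
  have "clique_partition VH EH m p"
    unfolding clique_partition_def vertex_partition_def
  proof (intro conjI ballI impI)
    show "p ` VH = {1..m}"
      using h unfolding p_def bij_betw_def by (simp add: image_comp)
    fix u v assume "u \<in> VH" "v \<in> VH" "u \<noteq> v \<and> p u = p v"
    then show "{u, v} \<in> EH"
      using fibres \<phi>_p by metis
  qed
  moreover have "{\<phi> i, \<phi> j} \<in> EF" if ij: "{i, j} \<in> quotient_edges VH EH m p" for i j
  proof -
    obtain u v where uv: "u \<in> VH" "v \<in> VH" "{u, v} \<in> EH" "p u \<noteq> p v" "{i, j} = {p u, p v}"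
      using ij unfolding quotient_edges_def by blast
    then have "q u \<noteq> q v"
      unfolding p_def by auto
    then have "{\<phi> (p u), \<phi> (p v)} \<in> EF"
      using uv edges by (simp add: \<phi>_p)
    with uv(5) show ?thesis
      by (metis doubleton_eq_iff insert_commute)
  qed
  moreover have "\<phi> ` {1..m} \<subseteq> VF"
    using \<phi> assms(3) by (simp add: bij_betw_def)
  ultimately have "({1..m}, quotient_edges VH EH m p) \<in> FH VH EH"
    and "contains_subgraph VF EF {1..m} (quotient_edges VH EH m p)"
    using \<phi> assms(2) unfolding FH_def contains_subgraph_def bij_betw_def
    by (blast intro: bipartite_if_hom_into_bipartite)+
  then show ?thesis by blast
qed

definition pullback_edges :: "('a \<Rightarrow> 'c) \<Rightarrow> 'a set set \<Rightarrow> 'c set set \<Rightarrow> 'a set set" where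
  "pullback_edges \<sigma> E EF = {e \<in> E. card (\<sigma> ` e) = 1 \<or> \<sigma> ` e \<in> EF}"

lemma graph_pullback_edges: "graph V E \<Longrightarrow> graph V (pullback_edges \<sigma> E EF)"
  unfolding graph_def pullback_edges_def by auto

lemma pullback_edges_not_contains_induced:
  assumes "finite VH" "bipartite VF EF"
    and FH_free: "\<forall>(W, D) \<in> FH VH EH. \<not> contains_subgraph VF EF W D"
    and "\<sigma> ` V \<subseteq> VF"
    and cliques: "\<And>u v. u \<in> V \<Longrightarrow> v \<in> V \<Longrightarrow> u \<noteq> v \<Longrightarrow> \<sigma> u = \<sigma> v \<Longrightarrow> {u, v} \<in> E"
  shows "\<not> contains_induced V (pullback_edges \<sigma> E EF) VH EH"
proof
  assume "contains_induced V (pullback_edges \<sigma> E EF) VH EH"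
  then obtain f where f: "inj_on f VH" "f ` VH \<subseteq> V"
    and iso: "\<And>u v. u \<in> VH \<Longrightarrow> v \<in> VH \<Longrightarrow> u \<noteq> v \<Longrightarrow>
                 {u, v} \<in> EH \<longleftrightarrow> {f u, f v} \<in> pullback_edges \<sigma> E EF"
    unfolding contains_induced_def by blast
  have "\<exists>(W, D) \<in> FH VH EH. contains_subgraph VF EF W D"
  proof (rule ex_FH_subgraph_if_clique_fibred_hom[where q = "\<sigma> \<circ> f"])
    show "(\<sigma> \<circ> f) ` VH \<subseteq> VF"
      using f(2) assms(4) by auto
    fix u v assume uv: "u \<in> VH" "v \<in> VH"
    show "{u, v} \<in> EH" if "u \<noteq> v" "(\<sigma> \<circ> f) u = (\<sigma> \<circ> f) v"
    proof -
      have "{f u, f v} \<in> E"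
        using cliques[of "f u" "f v"] f uv that by (auto simp: inj_on_eq_iff)
      then show ?thesis
        using iso[OF uv that(1)] that(2) by (simp add: pullback_edges_def)
    qed
    show "{(\<sigma> \<circ> f) u, (\<sigma> \<circ> f) v} \<in> EF" if "{u, v} \<in> EH" "(\<sigma> \<circ> f) u \<noteq> (\<sigma> \<circ> f) v"
      using iso[OF uv] that by (auto simp: pullback_edges_def)
  qed (use assms(1,2) in auto)
  with FH_free show False by blast
qed

lemma finite_edges: "graph V E \<Longrightarrow> finite E"
  unfolding graph_def by (meson PowI finite_Pow_iff finite_subset subsetI)

lemma card_edges_le_choose_two: "graph V E \<Longrightarrow> card E \<le> card V choose 2"
proof -
  assume "graph V E"
  then have "finite V" "E \<subseteq> {B. B \<subseteq> V \<and> card B = 2}"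
    unfolding graph_def by auto
  then show ?thesis
    using card_mono[of "{B. B \<subseteq> V \<and> card B = 2}" E] n_subsets[of V 2] by simp
qed

lemma card_ordered_edges:
  assumes "graph V E"
  shows "card {(x, y). {x, y} \<in> E \<and> x \<noteq> y} = 2 * card E"
proof -
  have ordered: "card {(x, y). x \<noteq> y \<and> {x, y} = e} = 2" if "e \<in> E" for e
  proof -
    have "card e = 2"
      using assms that unfolding graph_def by blast
    then obtain a b where "e = {a, b}" "a \<noteq> b"
      unfolding card_2_iff by blast
    then have "{(x, y). x \<noteq> y \<and> {x, y} = e} = {(a, b), (b, a)}"
      by (auto simp: doubleton_eq_iff)
    with \<open>a \<noteq> b\<close> show ?thesis by simp
  qed
  have "{(x, y). {x, y} \<in> E \<and> x \<noteq> y} = (\<Union>e\<in>E. {(x, y). x \<noteq> y \<and> {x, y} = e})"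
    by auto
  also have "card \<dots> = (\<Sum>e\<in>E. card {(x, y). x \<noteq> y \<and> {x, y} = e})"
    using finite_edges[OF assms] ordered by (intro card_UN_disjoint) (auto intro: card_ge_0_finite)
  also have "\<dots> = 2 * card E"
    using ordered by simp
  finally show ?thesis .
qed

lemma two_times_choose_two: "2 * (n choose 2) = n * (n - 1)"
proof -
  have "even (n * (n - 1))"
    by (cases n) auto
  then show ?thesis
    by (simp add: choose_two)
qed

lemma ex_permutes_pair:
  assumes "a \<in> A" "b \<in> A" "a \<noteq> b" "x \<in> A" "y \<in> A" "x \<noteq> y"
  shows "\<exists>\<tau>. \<tau> permutes A \<and> \<tau> a = x \<and> \<tau> b = y"
proof -
  define \<tau>\<^sub>1 where "\<tau>\<^sub>1 = transpose a x"
  define \<tau>\<^sub>2 where "\<tau>\<^sub>2 = transpose (\<tau>\<^sub>1 b) y"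
  have "\<tau>\<^sub>1 permutes A" "\<tau>\<^sub>2 permutes A"
    using assms by (auto simp: \<tau>\<^sub>1_def \<tau>\<^sub>2_def permutes_swap_id transpose_def)
  moreover have "\<tau>\<^sub>2 (\<tau>\<^sub>1 a) = x" "\<tau>\<^sub>2 (\<tau>\<^sub>1 b) = y"
    using assms by (auto simp: \<tau>\<^sub>1_def \<tau>\<^sub>2_def transpose_def)
  ultimately show ?thesis
    by (intro exI[of _ "\<tau>\<^sub>2 \<circ> \<tau>\<^sub>1"]) (auto intro: permutes_compose)
qed

lemma bij_betw_map_prod_off_diagonal:
  assumes "\<pi> permutes A"
  shows "bij_betw (map_prod \<pi> \<pi>) (A \<times> A - Id) (A \<times> A - Id)"
proof (rule bij_betw_subset)
  show "bij_betw (map_prod \<pi> \<pi>) (A \<times> A) (A \<times> A)"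
    using permutes_imp_bij[OF assms] permutes_imp_bij[OF assms] by (rule bij_betw_map_prod)
  show "map_prod \<pi> \<pi> ` (A \<times> A - Id) = A \<times> A - Id"
  proof (intro equalityI subsetI)
    fix z assume "z \<in> A \<times> A - Id"
    then show "z \<in> map_prod \<pi> \<pi> ` (A \<times> A - Id)"
      using assms
      by (intro image_eqI[of _ _ "map_prod (inv \<pi>) (inv \<pi>) z"])
        (auto simp: permutes_inverses permutes_in_image permutes_inv permutes_inv_eq)
  qed (use assms in \<open>auto simp: permutes_in_image permutes_inj_on inj_on_eq_iff\<close>)
qed auto

lemma card_off_diagonal:
  assumes "finite A"
  shows "card (A \<times> A - Id) = card A * (card A - 1)"
proof -
  have "A \<times> A - Id = (SIGMA x:A. A - {x})"
    by auto
  then show ?thesis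
    using assms by simp
qed

lemma card_permutes_pair_mem:
  fixes R :: "('a \<times> 'a) set"
  assumes "finite A" "a \<in> A" "b \<in> A" "a \<noteq> b"
  shows "card {\<pi>. \<pi> permutes A \<and> (\<pi> a, \<pi> b) \<in> R} * (card A * (card A - 1))
           = card (R \<inter> (A \<times> A - Id)) * fact (card A)"
proof -
  let ?P = "{\<pi>. \<pi> permutes A}" and ?D = "A \<times> A - Id"
  \<comment> \<open>N z does not depend on the off-diagonal pair z (compose with a permutation moving
    (a, b) to z), and summing N over all z counts, for every \<pi>, each pair of R \<inter> ?D once.\<close>
  define N :: "'a \<times> 'a \<Rightarrow> nat" where "N z = (\<Sum>\<pi>\<in>?P. of_bool (map_prod \<pi> \<pi> z \<in> R))" for z
  have fin: "finite ?P" "finite ?D"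
    using assms(1) by (simp_all add: finite_permutations)
  have N_ab: "N (a, b) = card {\<pi>. \<pi> permutes A \<and> (\<pi> a, \<pi> b) \<in> R}"
    unfolding N_def using fin(1) by (simp add: Collect_conj_eq)
  have N_const: "N z = N (a, b)" if off_diagonal: "z \<in> ?D" for z
  proof -
    obtain x y where z: "z = (x, y)" "x \<in> A" "y \<in> A" "x \<noteq> y"
      using off_diagonal by auto
    then obtain \<tau> where \<tau>: "\<tau> permutes A" "\<tau> a = x" "\<tau> b = y"
      using ex_permutes_pair assms(2-4) by metis
    have "N (a, b) = (\<Sum>\<pi>\<in>?P. of_bool (map_prod (\<pi> \<circ> \<tau>) (\<pi> \<circ> \<tau>) (a, b) \<in> R))"
      unfolding N_def by (rule sum_permutations_compose_right[OF \<tau>(1)])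
    then show ?thesis
      unfolding N_def z using \<tau>(2,3) by simp
  qed
  have "card ?D * N (a, b) = (\<Sum>z\<in>?D. N z)"
    using N_const by simp
  also have "\<dots> = (\<Sum>\<pi>\<in>?P. \<Sum>z\<in>?D. of_bool (map_prod \<pi> \<pi> z \<in> R))"
    unfolding N_def by (rule sum.swap)
  also have "\<dots> = (\<Sum>\<pi>\<in>?P. card (R \<inter> ?D))"
  proof (rule sum.cong[OF refl])
    fix \<pi> assume "\<pi> \<in> ?P"
    then have "(\<Sum>z\<in>?D. of_bool (map_prod \<pi> \<pi> z \<in> R)) = (\<Sum>z\<in>?D. of_bool (z \<in> R))"
      using bij_betw_map_prod_off_diagonal by (intro sum.reindex_bij_betw) auto
    also have "\<dots> = card (R \<inter> ?D)"
      using fin(2) by (simp add: Int_commute)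
    finally show "(\<Sum>z\<in>?D. of_bool (map_prod \<pi> \<pi> z \<in> R)) = card (R \<inter> ?D)" .
  qed
  also have "\<dots> = card (R \<inter> ?D) * fact (card A)"
    using card_permutations[OF refl assms(1)] by simp
  finally show ?thesis
    using card_off_diagonal[OF assms(1)] N_ab by (simp add: mult.commute)
qed

lemma card_permutes_edge:
  assumes "graph VF EF" "a \<in> VF" "b \<in> VF" "a \<noteq> b"
  shows "card {\<pi>. \<pi> permutes VF \<and> {\<pi> a, \<pi> b} \<in> EF} * (card VF choose 2) = card EF * fact (card VF)"
proof -
  have "{(x, y). {x, y} \<in> EF} \<inter> (VF \<times> VF - Id) = {(x, y). {x, y} \<in> EF \<and> x \<noteq> y}"
    using assms(1) unfolding graph_def by auto
  then have "card {\<pi>. \<pi> permutes VF \<and> {\<pi> a, \<pi> b} \<in> EF} * (2 * (card VF choose 2))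
               = 2 * card EF * fact (card VF)"
    using card_permutes_pair_mem[of VF a b "{(x, y). {x, y} \<in> EF}"] assms(1-4)
      card_ordered_edges[OF assms(1)]
    by (simp add: two_times_choose_two graph_def)
  then show ?thesis
    by simp
qed

lemma card_permutes_pullback_edge_ge:
  assumes "graph V E" "graph VF EF" "\<sigma> ` V \<subseteq> VF" "e \<in> E"
  shows "real (fact (card VF)) * card EF / (card VF choose 2)
           \<le> card {\<pi>. \<pi> permutes VF \<and> e \<in> pullback_edges (\<pi> \<circ> \<sigma>) E EF}"
proof -
  have "card e = 2" "e \<subseteq> V"
    using assms(1,4) unfolding graph_def by auto
  then obtain u v where e: "e = {u, v}" "u \<noteq> v" "u \<in> V" "v \<in> V"
    unfolding card_2_iff by auto
  show ?thesis
  proof (cases "\<sigma> u = \<sigma> v")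
    case True
    then have "{\<pi>. \<pi> permutes VF \<and> e \<in> pullback_edges (\<pi> \<circ> \<sigma>) E EF} = {\<pi>. \<pi> permutes VF}"
      using assms(4) by (auto simp: pullback_edges_def e)
    moreover have "card {\<pi>. \<pi> permutes VF} = fact (card VF)"
      using assms(2) unfolding graph_def by (simp add: card_permutations)
    \<comment> \<open>also when card VF < 2, where the division by 0 yields 0\<close>
    moreover have "real (card EF) / (card VF choose 2) \<le> 1"
      using card_edges_le_choose_two[OF assms(2)] by (simp add: divide_le_eq_1) linarith
    ultimately show ?thesis
      using mult_left_mono[of "real (card EF) / (card VF choose 2)" 1 "real (fact (card VF))"]
      by simp
  next
    case False
    have "{\<pi>. \<pi> permutes VF \<and> e \<in> pullback_edges (\<pi> \<circ> \<sigma>) E EF}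
            = {\<pi>. \<pi> permutes VF \<and> {\<pi> (\<sigma> u), \<pi> (\<sigma> v)} \<in> EF}"
      using assms(4) False
      by (auto simp: pullback_edges_def e card_insert_if inj_eq dest: permutes_inj)
    moreover have uv: "\<sigma> u \<in> VF" "\<sigma> v \<in> VF"
      using assms(3) e by auto
    moreover have "card {\<sigma> u, \<sigma> v} \<le> card VF"
      using assms(2) uv unfolding graph_def by (intro card_mono) auto
    then have "card VF choose 2 > 0"
      using False by simp
    moreover have "real (fact (card VF)) * card EF
                     = card {\<pi>. \<pi> permutes VF \<and> {\<pi> (\<sigma> u), \<pi> (\<sigma> v)} \<in> EF} * (card VF choose 2)"
      unfolding card_permutes_edge[OF assms(2) uv False] by simp
    ultimately show ?thesis
      by (simp add: pos_divide_le_eq)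
  qed
qed

lemma ex_ge_average:
  fixes f :: "'x \<Rightarrow> 'b::linordered_semidom"
  assumes "finite A" "A \<noteq> {}" "of_nat (card A) * b \<le> sum f A"
  shows "\<exists>x\<in>A. b \<le> f x"
proof (rule ccontr)
  assume "\<not> ?thesis"
  then have "sum f A < of_nat (card A) * b"
    using assms(1,2) by (intro sum_bounded_above_strict) (auto simp: card_gt_0_iff)
  with assms(3) show False by simp
qed

lemma ex_permutes_dense_pullback:
  assumes "graph V E" "graph VF EF" "\<sigma> ` V \<subseteq> VF"
  shows "\<exists>\<pi>. \<pi> permutes VF \<and>
           real (card E) * card EF / (card VF choose 2) \<le> card (pullback_edges (\<pi> \<circ> \<sigma>) E EF)"
proof -
  let ?P = "{\<pi>. \<pi> permutes VF}" and ?G = "\<lambda>\<pi>. pullback_edges (\<pi> \<circ> \<sigma>) E EF"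
  have fin: "finite VF" "finite ?P" "finite E"
    using assms(1,2) finite_permutations finite_edges unfolding graph_def by auto
  have double_count: "(\<Sum>\<pi>\<in>?P. card (?G \<pi>)) = (\<Sum>e\<in>E. card {\<pi>. \<pi> permutes VF \<and> e \<in> ?G \<pi>})"
  proof -
    have "?G \<pi> = {e \<in> E. e \<in> ?G \<pi>}" for \<pi>
      by (auto simp: pullback_edges_def)
    then show ?thesis
      using sum_multicount_gen[OF fin(2,3), of "\<lambda>\<pi> e. e \<in> ?G \<pi>"] by simp
  qed
  have "real (card ?P) * (real (card E) * card EF / (card VF choose 2))
          = (\<Sum>e\<in>E. real (fact (card VF)) * card EF / (card VF choose 2))"
    using card_permutations[OF refl fin(1)] by simp
  also have "\<dots> \<le> (\<Sum>e\<in>E. real (card {\<pi>. \<pi> permutes VF \<and> e \<in> ?G \<pi>}))"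
    by (rule sum_mono) (rule card_permutes_pullback_edge_ge[OF assms])
  also have "\<dots> = (\<Sum>\<pi>\<in>?P. real (card (?G \<pi>)))"
    unfolding of_nat_sum[symmetric] double_count ..
  finally show ?thesis
    using ex_ge_average[OF fin(2)] permutes_id by blast
qed

theorem lemma2p3:
  fixes V :: "'a set" and E :: "'a set set"
    and VH :: "'b set" and EH :: "'b set set"
    and VF :: "'c set" and EF :: "'c set set"
    and k :: nat
  assumes "graph V E"
    and "chromatic_number V (complement V E) = k"
    and "graph VH EH"
    and "graph VF EF" and "bipartite VF EF" and "card VF = k"
    and "\<forall>(W, D) \<in> FH VH EH. \<not> contains_subgraph VF EF W D"
  shows "\<exists>VG EG. graph VG EG \<and> VG \<subseteq> V \<and> EG \<subseteq> E \<and>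
           real (card EG) \<ge> real (card E) * real (card EF) / real (k choose 2) \<and>
           \<not> contains_induced VG EG VH EH"
proof -
  have "finite V" "finite VF" "finite VH"
    using assms(1,3,4) unfolding graph_def by auto
  then obtain \<sigma> where \<sigma>: "\<sigma> ` V \<subseteq> VF"
    and cliques: "\<forall>u\<in>V. \<forall>v\<in>V. u \<noteq> v \<and> \<sigma> u = \<sigma> v \<longrightarrow> {u, v} \<in> E"
    using ex_clique_cover_indexed_by assms(2,6) by metis
  obtain \<pi> where \<pi>: "\<pi> permutes VF"
    and dense: "real (card E) * card EF / (card VF choose 2) \<le> card (pullback_edges (\<pi> \<circ> \<sigma>) E EF)"
    using ex_permutes_dense_pullback[OF assms(1,4) \<sigma>] by blast
  have "(\<pi> \<circ> \<sigma>) ` V \<subseteq> VF"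
    using \<sigma> \<pi> by (auto simp: permutes_in_image)
  moreover have "{u, v} \<in> E" if "u \<in> V" "v \<in> V" "u \<noteq> v" "(\<pi> \<circ> \<sigma>) u = (\<pi> \<circ> \<sigma>) v" for u v
    using that cliques permutes_inj[OF \<pi>] by (auto simp: inj_eq)
  ultimately have "\<not> contains_induced V (pullback_edges (\<pi> \<circ> \<sigma>) E EF) VH EH"
    by (rule pullback_edges_not_contains_induced[OF \<open>finite VH\<close> assms(5,7)])
  moreover have "pullback_edges (\<pi> \<circ> \<sigma>) E EF \<subseteq> E"
    by (auto simp: pullback_edges_def)
  ultimately show ?thesis
    using graph_pullback_edges[OF assms(1)] dense unfolding assms(6) by blast
qed

end
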